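(* Let $r\ge 3$ and $1\le \ell\le r-2$, let $G(r,\ell)$ be the graph obtained from $K_r\circ K_1$ by deleting $r-\ell$ leaves, and let $L$ denote the set of leaves of $G(r,\ell)$. Then $T\subseteq V(G(r,\ell))$ is a $\gamma_P$-irrelevant set of $G(r,\ell)$ if and only if $T\subseteq L$.
   Context: $K_r\circ K_1$ is the corona: $K_r$ with one pendant leaf attached to each vertex. Zero forcing: starting with a set $S$ of blue vertices, a blue vertex $v$ may turn blue a white vertex $w$ if $w$ is the only white neighbor of $v$; $S$ is a zero forcing set if repeated application colors all vertices blue. A set $S\subseteq V(G)$ is a power dominating set if its closed neighborhood $N[S]=\bigcup_{x\in S}(\{x\}\cup N(x))$ is a zero forcing set of $G$. A vertex is $\gamma_P$-irrelevant if it belongs to no minimal (under inclusion) power dominating set; a set is $\gamma_P$-irrelevant if all its vertices are. *)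

theory Defs
  imports Main
begin

(* A graph is given by a vertex set V and a symmetric irreflexive adjacency relation E. *)

definition nbhd :: "'a set \<Rightarrow> ('a \<Rightarrow> 'a \<Rightarrow> bool) \<Rightarrow> 'a \<Rightarrow> 'a set" where
  "nbhd V E v = {u \<in> V. E v u}"

inductive_set zf_closure :: "'a set \<Rightarrow> ('a \<Rightarrow> 'a \<Rightarrow> bool) \<Rightarrow> 'a set \<Rightarrow> 'a set"
  for V E S where
  init: "x \<in> S \<Longrightarrow> x \<in> V \<Longrightarrow> x \<in> zf_closure V E S"
| force: "v \<in> zf_closure V E S \<Longrightarrow> w \<in> nbhd V E v \<Longrightarrow>
          (\<forall>u \<in> nbhd V E v - {w}. u \<in> zf_closure V E S) \<Longrightarrow> w \<in> zf_closure V E S"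

definition zero_forcing_set :: "'a set \<Rightarrow> ('a \<Rightarrow> 'a \<Rightarrow> bool) \<Rightarrow> 'a set \<Rightarrow> bool" where
  "zero_forcing_set V E S \<longleftrightarrow> S \<subseteq> V \<and> zf_closure V E S = V"

definition closed_nbhd_set :: "'a set \<Rightarrow> ('a \<Rightarrow> 'a \<Rightarrow> bool) \<Rightarrow> 'a set \<Rightarrow> 'a set" where
  "closed_nbhd_set V E S = (\<Union>x\<in>S. {x} \<union> nbhd V E x)"

definition power_dominating_set :: "'a set \<Rightarrow> ('a \<Rightarrow> 'a \<Rightarrow> bool) \<Rightarrow> 'a set \<Rightarrow> bool" where
  "power_dominating_set V E S \<longleftrightarrow> S \<subseteq> V \<and> zero_forcing_set V E (closed_nbhd_set V E S)"

definition minimal_pds :: "'a set \<Rightarrow> ('a \<Rightarrow> 'a \<Rightarrow> bool) \<Rightarrow> 'a set \<Rightarrow> bool" where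
  "minimal_pds V E S \<longleftrightarrow> power_dominating_set V E S \<and>
     (\<forall>S'. S' \<subset> S \<longrightarrow> \<not> power_dominating_set V E S')"

definition gammaP_irrelevant_vertex :: "'a set \<Rightarrow> ('a \<Rightarrow> 'a \<Rightarrow> bool) \<Rightarrow> 'a \<Rightarrow> bool" where
  "gammaP_irrelevant_vertex V E v \<longleftrightarrow> v \<in> V \<and> \<not> (\<exists>S. minimal_pds V E S \<and> v \<in> S)"

definition gammaP_irrelevant_set :: "'a set \<Rightarrow> ('a \<Rightarrow> 'a \<Rightarrow> bool) \<Rightarrow> 'a set \<Rightarrow> bool" where
  "gammaP_irrelevant_set V E T \<longleftrightarrow> T \<subseteq> V \<and> (\<forall>v\<in>T. gammaP_irrelevant_vertex V E v)"

(* G(r,l): K_r on vertices Inl 0..Inl (r-1); leaves Inr i attached to Inl i for i < l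
   (i.e. K_r o K_1 with the r - l leaves of Inl l, ..., Inl (r-1) deleted). *)
definition G_V :: "nat \<Rightarrow> nat \<Rightarrow> (nat + nat) set" where
  "G_V r l = Inl ` {..<r} \<union> Inr ` {..<l}"

fun G_E :: "nat \<Rightarrow> nat \<Rightarrow> (nat + nat) \<Rightarrow> (nat + nat) \<Rightarrow> bool" where
  "G_E r l (Inl i) (Inl j) \<longleftrightarrow> i < r \<and> j < r \<and> i \<noteq> j"
| "G_E r l (Inl i) (Inr j) \<longleftrightarrow> i = j \<and> j < l"
| "G_E r l (Inr i) (Inl j) \<longleftrightarrow> i = j \<and> i < l"
| "G_E r l (Inr i) (Inr j) \<longleftrightarrow> False"

definition G_leaves :: "nat \<Rightarrow> nat \<Rightarrow> (nat + nat) set" where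
  "G_leaves r l = Inr ` {..<l}"

end

theory Submission
  imports Defs
begin

text \<open>Each clique vertex of \<open>G(r,\<ell>)\<close> alone is a power dominating set: its closed
  neighbourhood is the whole clique, after which every clique vertex forces its leaf.
  Hence every minimal power dominating set containing a clique vertex is that singleton.
  A set of leaves is never power dominating, because the at least two leafless clique
  vertices form a fort, i.e. a nonempty vertex set that no outside vertex has exactly one
  neighbour in, and zero forcing cannot enter a fort from outside. So the minimal power
  dominating sets are exactly the clique singletons and no leaf lies in any of them.\<close>

definition fort :: "'a set \<Rightarrow> ('a \<Rightarrow> 'a \<Rightarrow> bool) \<Rightarrow> 'a set \<Rightarrow> bool" where
  "fort V E F \<longleftrightarrow> F \<noteq> {} \<and> F \<subseteq> V \<and>
     (\<forall>v\<in>V - F. \<forall>w\<in>nbhd V E v \<inter> F. \<exists>u\<in>nbhd V E v \<inter> F. u \<noteq> w)"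

lemma zf_closure_subset: "zf_closure V E S \<subseteq> V"
  by (auto elim: zf_closure.cases simp: nbhd_def)

lemma zf_closure_empty: "zf_closure V E {} = {}"
proof -
  have "x \<notin> zf_closure V E {}" for x
  proof
    assume "x \<in> zf_closure V E {}"
    then show False by (induction rule: zf_closure.induct) auto
  qed
  then show ?thesis by blast
qed

lemma zf_closure_disjoint_fort:
  assumes "fort V E F" and "S \<inter> F = {}"
  shows "zf_closure V E S \<inter> F = {}"
proof -
  have "x \<notin> F" if "x \<in> zf_closure V E S" for x
    using that
  proof (induction rule: zf_closure.induct)
    case (init x)
    then show ?case using assms(2) by blast
  next
    case (force v w)
    have "v \<in> V - F" using force.hyps(1) force.IH(1) zf_closure_subset[of V E S] by blast
    show ?case
    proof
      assume "w \<in> F"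
      then have "w \<in> nbhd V E v \<inter> F" using force.hyps(2) by blast
      then obtain u where "u \<in> nbhd V E v \<inter> F" "u \<noteq> w"
        using assms(1) \<open>v \<in> V - F\<close> unfolding fort_def by blast
      then show False using force.IH(2) by blast
    qed
  qed
  then show ?thesis by blast
qed

lemma not_power_dominating_set_if_fort:
  assumes "fort V E F" and "closed_nbhd_set V E S \<inter> F = {}"
  shows "\<not> power_dominating_set V E S"
proof
  assume "power_dominating_set V E S"
  then have "zf_closure V E (closed_nbhd_set V E S) = V"
    by (simp add: power_dominating_set_def zero_forcing_set_def)
  then have "V \<inter> F = {}"
    using zf_closure_disjoint_fort[OF assms] by simp
  moreover have "F \<noteq> {}" "F \<subseteq> V"
    using assms(1) by (simp_all add: fort_def)
  ultimately show False by blast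
qed

lemma not_power_dominating_set_empty:
  assumes "V \<noteq> {}"
  shows "\<not> power_dominating_set V E {}"
  using assms
  by (simp add: power_dominating_set_def zero_forcing_set_def closed_nbhd_set_def
      zf_closure_empty)

lemma minimal_pds_singleton:
  assumes "V \<noteq> {}" and "power_dominating_set V E {v}"
  shows "minimal_pds V E {v}"
proof -
  have "\<not> power_dominating_set V E S'" if "S' \<subset> {v}" for S'
  proof -
    have "S' = {}" using that by blast
    then show ?thesis using not_power_dominating_set_empty[OF assms(1)] by simp
  qed
  then show ?thesis
    using assms(2) by (simp add: minimal_pds_def)
qed

lemma minimal_pds_eq_singleton:
  assumes "minimal_pds V E S" and "v \<in> S" and "power_dominating_set V E {v}"
  shows "S = {v}"
proof (rule ccontr)
  assume "S \<noteq> {v}"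
  then have "{v} \<subset> S" using assms(2) by blast
  then show False using assms(1,3) by (simp add: minimal_pds_def)
qed

lemma G_nbhd_Inl:
  assumes "i < r"
  shows "nbhd (G_V r l) (G_E r l) (Inl i) =
    Inl ` ({..<r} - {i}) \<union> (if i < l then {Inr i} else {})"
  using assms by (auto simp: nbhd_def G_V_def elim: G_E.elims)

lemma power_dominating_set_G_Inl:
  assumes "i < r" and "l \<le> r"
  shows "power_dominating_set (G_V r l) (G_E r l) {Inl i}"
proof -
  let ?V = "G_V r l" and ?E = "G_E r l"
  let ?N = "closed_nbhd_set ?V ?E {Inl i}"
  have N_eq: "?N = insert (Inl i) (nbhd ?V ?E (Inl i))"
    by (simp add: closed_nbhd_set_def)
  have "Inl i \<in> ?V" using assms(1) by (simp add: G_V_def)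
  then have N_sub_V: "?N \<subseteq> ?V"
    unfolding N_eq by (auto simp: nbhd_def)
  have "Inl ` {..<r} \<subseteq> ?N"
    unfolding N_eq using assms(1) by (auto simp: G_nbhd_Inl)
  then have clique_blue: "Inl ` {..<r} \<subseteq> zf_closure ?V ?E ?N"
    by (auto simp: G_V_def intro: zf_closure.init)
  have leaf_blue: "Inr j \<in> zf_closure ?V ?E ?N" if "j < l" for j
  proof (rule zf_closure.force[where v = "Inl j"])
    have "j < r" using that assms(2) by simp
    then show "Inl j \<in> zf_closure ?V ?E ?N" using clique_blue by auto
    show "Inr j \<in> nbhd ?V ?E (Inl j)" using that by (simp add: nbhd_def G_V_def)
    show "\<forall>u\<in>nbhd ?V ?E (Inl j) - {Inr j}. u \<in> zf_closure ?V ?E ?N"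
      using clique_blue \<open>j < r\<close> by (auto simp: G_nbhd_Inl)
  qed
  have "?V \<subseteq> zf_closure ?V ?E ?N"
    using clique_blue leaf_blue unfolding G_V_def by blast
  then have "zf_closure ?V ?E ?N = ?V"
    by (rule subset_antisym[OF zf_closure_subset])
  then show ?thesis
    using assms N_sub_V \<open>Inl i \<in> ?V\<close>
    by (simp add: power_dominating_set_def zero_forcing_set_def)
qed

lemma fort_G_leafless:
  assumes "l + 2 \<le> r"
  shows "fort (G_V r l) (G_E r l) (Inl ` {l..<r})"
  unfolding fort_def
proof (intro conjI ballI)
  show "Inl ` {l..<r} \<noteq> {}" and "Inl ` {l..<r} \<subseteq> G_V r l"
    using assms by (auto simp: G_V_def)
next
  fix v w
  assume "v \<in> G_V r l - Inl ` {l..<r}"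
    and "w \<in> nbhd (G_V r l) (G_E r l) v \<inter> Inl ` {l..<r}"
  then obtain j k where "v = Inl j" "j < l" "w = Inl k" "l \<le> k"
    by (auto simp: G_V_def nbhd_def inj_image_mem_iff elim: G_E.elims)
  then have "Inl (if k = l then l + 1 else l) \<in> nbhd (G_V r l) (G_E r l) v \<inter> Inl ` {l..<r} - {w}"
    using assms by (auto simp: G_V_def nbhd_def)
  then show "\<exists>u\<in>nbhd (G_V r l) (G_E r l) v \<inter> Inl ` {l..<r}. u \<noteq> w"
    by blast
qed

lemma not_power_dominating_set_G_leaves:
  assumes "l + 2 \<le> r" and "S \<subseteq> G_leaves r l"
  shows "\<not> power_dominating_set (G_V r l) (G_E r l) S"
proof (rule not_power_dominating_set_if_fort[OF fort_G_leafless[OF assms(1)]])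
  have "x \<in> Inr ` {..<l} \<union> Inl ` {..<l}" if x: "x \<in> closed_nbhd_set (G_V r l) (G_E r l) S" for x
  proof -
    obtain j where "j < l" "x = Inr j \<or> x \<in> nbhd (G_V r l) (G_E r l) (Inr j)"
      using x assms(2) by (auto simp: closed_nbhd_set_def G_leaves_def)
    then show ?thesis by (auto simp: nbhd_def elim: G_E.elims)
  qed
  then show "closed_nbhd_set (G_V r l) (G_E r l) S \<inter> Inl ` {l..<r} = {}"
    by fastforce
qed

lemma minimal_pds_G_iff:
  assumes "l + 2 \<le> r"
  shows "minimal_pds (G_V r l) (G_E r l) S \<longleftrightarrow> (\<exists>i<r. S = {Inl i})"
proof
  assume min: "minimal_pds (G_V r l) (G_E r l) S"
  then have "S \<subseteq> G_V r l"
    by (simp add: minimal_pds_def power_dominating_set_def)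
  show "\<exists>i<r. S = {Inl i}"
  proof (cases "S \<subseteq> G_leaves r l")
    case True
    then show ?thesis
      using min not_power_dominating_set_G_leaves[OF assms] by (simp add: minimal_pds_def)
  next
    case False
    then obtain i where "i < r" and i_in_S: "Inl i \<in> S"
      using \<open>S \<subseteq> G_V r l\<close> unfolding G_V_def G_leaves_def by blast
    moreover have "power_dominating_set (G_V r l) (G_E r l) {Inl i}"
      using \<open>i < r\<close> assms by (simp add: power_dominating_set_G_Inl)
    ultimately show ?thesis
      using minimal_pds_eq_singleton[OF min i_in_S] by blast
  qed
next
  assume "\<exists>i<r. S = {Inl i}"
  then obtain i where "i < r" "S = {Inl i}" by blast
  moreover have "G_V r l \<noteq> {}"
    using \<open>i < r\<close> by (auto simp: G_V_def)
  moreover have "power_dominating_set (G_V r l) (G_E r l) {Inl i}"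
    using \<open>i < r\<close> assms by (simp add: power_dominating_set_G_Inl)
  ultimately show "minimal_pds (G_V r l) (G_E r l) S"
    by (simp add: minimal_pds_singleton)
qed

lemma gammaP_irrelevant_vertex_G_iff:
  assumes "l + 2 \<le> r"
  shows "gammaP_irrelevant_vertex (G_V r l) (G_E r l) v \<longleftrightarrow> v \<in> G_leaves r l"
proof -
  have "(\<exists>S. minimal_pds (G_V r l) (G_E r l) S \<and> v \<in> S) \<longleftrightarrow> (\<exists>i<r. v = Inl i)"
    using minimal_pds_G_iff[OF assms] by auto
  then show ?thesis
    by (auto simp: gammaP_irrelevant_vertex_def G_V_def G_leaves_def)
qed

theorem proposition2p21:
  fixes r l :: nat and T :: "(nat + nat) set"
  assumes "r \<ge> 3" and "1 \<le> l" and "l \<le> r - 2"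
    and "T \<subseteq> G_V r l"
  shows "gammaP_irrelevant_set (G_V r l) (G_E r l) T \<longleftrightarrow> T \<subseteq> G_leaves r l"
proof -
  have "l + 2 \<le> r" using assms(1,3) by linarith
  then show ?thesis
    using assms(4) by (auto simp: gammaP_irrelevant_set_def gammaP_irrelevant_vertex_G_iff)
qed

end
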